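(* Let $f$ be a $2\pi$-periodic continuous function with modulus of continuity $\omega(t)$, and let $A=(a_{n,k})$ be a lower triangular infinite matrix of real numbers ($a_{n,k}=0$ for $k>n$) with $a_{n,k}\ge 0$ and $\sum_{k=0}^n a_{n,k}=1$ for all $n$. Let $\beta\ge0$ and suppose \[ \sum_{k=m}^{\infty}(k+1)^{\beta}\left|\frac{a_{n,k}}{(k+1)^{\beta}}-\frac{a_{n,k+1}}{(k+2)^{\beta}}\right|=\mathcal{O}(a_{n,m}) \] for all $m=0,1,\dots,n$ and $n=0,1,\dots$. Then \[ \|T_{n,A}(f)-f\|=\mathcal{O}\left(\omega\left(\frac{\pi}{n+1}\right)+\sum_{v=1}^{n}v^{-1}\omega\left(\frac{\pi}{v}\right)\sum_{j=0}^{v}a_{n,j}\right). \]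
   Context: $S_k(f;x)$ is the $k$-th partial sum of the Fourier series of $f$ at $x$, and $T_{n,A}(f;x):=\sum_{k=0}^n a_{n,k}S_k(f;x)$. $\|\cdot\|$ is the sup-norm. $\omega(\delta)=\sup_{|h|\le\delta}\sup_x|f(x+h)-f(x)|$. The notation $u=\mathcal{O}(v)$ means $u\le Cv$ for a positive constant $C$ (independent of $n$). *)

theory Defs
  imports "HOL-Analysis.Analysis"
begin

definition fourier_a :: "(real \<Rightarrow> real) \<Rightarrow> nat \<Rightarrow> real" where
  "fourier_a f k = (1 / pi) * integral {-pi..pi} (\<lambda>t. f t * cos (real k * t))"

definition fourier_b :: "(real \<Rightarrow> real) \<Rightarrow> nat \<Rightarrow> real" where
  "fourier_b f k = (1 / pi) * integral {-pi..pi} (\<lambda>t. f t * sin (real k * t))"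

definition fourier_partial_sum :: "(real \<Rightarrow> real) \<Rightarrow> nat \<Rightarrow> real \<Rightarrow> real" where
  "fourier_partial_sum f k x =
     fourier_a f 0 / 2 +
     (\<Sum>j\<in>{1..k}. fourier_a f j * cos (real j * x) + fourier_b f j * sin (real j * x))"

definition T_mean :: "(nat \<Rightarrow> nat \<Rightarrow> real) \<Rightarrow> (real \<Rightarrow> real) \<Rightarrow> nat \<Rightarrow> real \<Rightarrow> real" where
  "T_mean a f n x = (\<Sum>k\<in>{0..n}. a n k * fourier_partial_sum f k x)"

definition sup_norm :: "(real \<Rightarrow> real) \<Rightarrow> real" where
  "sup_norm g = (SUP x. \<bar>g x\<bar>)"

definition modulus_cont :: "(real \<Rightarrow> real) \<Rightarrow> real \<Rightarrow> real" where
  "modulus_cont f \<delta> = (SUP p\<in>{(h, x). \<bar>h\<bar> \<le> \<delta>}. \<bar>f (snd p + fst p) - f (snd p)\<bar>)"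

end

theory Submission
  imports Defs "HOL-Library.Periodic_Fun"
begin

(*
  With the Dirichlet kernel D_k and K_n = sum_k a_{n,k} D_k, periodicity gives
  T_{n,A}(f;x) - f(x) = (1/pi) * integral_{-pi}^{pi} (f(x+u) - f(x)) K_n(u) du.
  Fold [-pi,pi] onto [0,pi] and split it into [0, pi/(n+1)], where |K_n| <= n+1, and the blocks
  [pi/(v+1), pi/v], v = 1..n, where |K_n(u)| = O((v+1) sum_{j<=v} a_{n,j}); integrating the modulus
  of continuity against these bounds gives the two terms of the estimate.

  On a block, 2 sin(u/2) K_n(u) = sum_k a_{n,k} sin((k+1/2)u). The terms k < v contribute at most
  sum_{j<v} a_{n,j}. For k >= v, summation by parts against (k+1)^beta sin((k+1/2)u), whose partial
  sums are O((k+1)^beta / sin(u/2)) by Abel's inequality, bounds the tail, via the hypothesis, by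
  O(a_{n,v} / sin(u/2)). The hypothesis also makes each row quasi-monotone, a_{n,v} = O(a_{n,j}) for
  j <= v, hence (v+1) a_{n,v} = O(sum_{j<=v} a_{n,j}); finally sin(u/2) >= u/8 >= pi/(8(v+1)).
*)

section \<open>Summation by parts\<close>

lemma sum_by_parts:
  fixes b w :: "nat \<Rightarrow> 'a::comm_ring"
  assumes "m \<le> n"
  shows "(\<Sum>k=m..n. b k * w k) =
    b n * (\<Sum>j=m..n. w j) + (\<Sum>k=m..<n. (b k - b (Suc k)) * (\<Sum>j=m..k. w j))"
  using assms
proof (induction n rule: dec_induct)
  case (step n)
  then show ?case
    by (simp add: sum.atLeastLessThan_Suc algebra_simps)
qed simp

lemma Abel_inequality:
  fixes c w :: "nat \<Rightarrow> real"
  assumes "m \<le> n" and "incseq c" and "0 \<le> c m"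
    and partial_sums: "\<And>k. m \<le> k \<Longrightarrow> k \<le> n \<Longrightarrow> \<bar>\<Sum>j=m..k. w j\<bar> \<le> B"
  shows "\<bar>\<Sum>k=m..n. c k * w k\<bar> \<le> 2 * B * c n"
proof -
  have "0 \<le> B"
    using partial_sums[of m] \<open>m \<le> n\<close> by simp
  have "c m \<le> c n"
    using \<open>incseq c\<close> \<open>m \<le> n\<close> by (simp add: incseq_def)
  have "\<bar>\<Sum>k=m..n. c k * w k\<bar>
      = \<bar>c n * (\<Sum>j=m..n. w j) + (\<Sum>k=m..<n. (c k - c (Suc k)) * (\<Sum>j=m..k. w j))\<bar>"
    by (simp only: sum_by_parts[OF \<open>m \<le> n\<close>])
  also have "\<dots> \<le> c n * \<bar>\<Sum>j=m..n. w j\<bar> + (\<Sum>k=m..<n. (c (Suc k) - c k) * \<bar>\<Sum>j=m..k. w j\<bar>)"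
  proof (intro order.trans[OF abs_triangle_ineq] add_mono)
    show "\<bar>c n * (\<Sum>j=m..n. w j)\<bar> \<le> c n * \<bar>\<Sum>j=m..n. w j\<bar>"
      using \<open>0 \<le> c m\<close> \<open>c m \<le> c n\<close> by (simp add: abs_mult)
    show "\<bar>\<Sum>k=m..<n. (c k - c (Suc k)) * (\<Sum>j=m..k. w j)\<bar>
        \<le> (\<Sum>k=m..<n. (c (Suc k) - c k) * \<bar>\<Sum>j=m..k. w j\<bar>)"
      using \<open>incseq c\<close> by (intro order.trans[OF sum_abs] sum_mono) (simp add: abs_mult incseq_SucD)
  qed
  also have "\<dots> \<le> c n * B + (\<Sum>k=m..<n. (c (Suc k) - c k) * B)"
    using \<open>m \<le> n\<close> \<open>0 \<le> c m\<close> \<open>c m \<le> c n\<close> \<open>incseq c\<close>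
    by (intro add_mono mult_left_mono sum_mono partial_sums) (auto simp: incseq_SucD)
  also have "\<dots> = c n * B + (c n - c m) * B"
    by (simp add: sum_distrib_right[symmetric] sum_Suc_diff' \<open>m \<le> n\<close>)
  also have "\<dots> \<le> 2 * B * c n"
    using \<open>0 \<le> B\<close> \<open>0 \<le> c m\<close> by (simp add: algebra_simps)
  finally show ?thesis .
qed

section \<open>Rows of bounded weighted variation\<close>

definition weighted_variation :: "real \<Rightarrow> (nat \<Rightarrow> real) \<Rightarrow> nat \<Rightarrow> real" where
  "weighted_variation \<beta> r k =
     (real k + 1) powr \<beta> * \<bar>r k / (real k + 1) powr \<beta> - r (k + 1) / (real k + 2) powr \<beta>\<bar>"

lemma weighted_variation_nonneg: "0 \<le> weighted_variation \<beta> r k"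
  by (simp add: weighted_variation_def)

lemma weighted_variation_Suc:
  "weighted_variation \<beta> r k =
     (real k + 1) powr \<beta> * \<bar>r k / (real k + 1) powr \<beta> - r (Suc k) / (real (Suc k) + 1) powr \<beta>\<bar>"
  by (simp add: weighted_variation_def add_ac)

lemma sum_weighted_variation_eq_suminf:
  assumes "\<And>k. n < k \<Longrightarrow> r k = 0"
  shows "(\<Sum>k=m..n. weighted_variation \<beta> r k) = (\<Sum>k. if m \<le> k then weighted_variation \<beta> r k else 0)"
proof -
  have "(\<Sum>k. if m \<le> k then weighted_variation \<beta> r k else 0)
      = (\<Sum>k=m..n. if m \<le> k then weighted_variation \<beta> r k else 0)"
    by (rule suminf_finite) (auto simp: weighted_variation_def assms)
  then show ?thesis
    by simp
qed

lemma le_sum_weighted_variation: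
  assumes "0 \<le> \<beta>" "v \<le> n" "r (Suc n) = 0" "0 \<le> r v"
  shows "r v \<le> (\<Sum>k=v..n. weighted_variation \<beta> r k)"
proof -
  define b where "b k = r k / (real k + 1) powr \<beta>" for k
  have "r v = (real v + 1) powr \<beta> * \<bar>b v - b (Suc n)\<bar>"
    using assms by (simp add: b_def)
  also have "\<bar>b v - b (Suc n)\<bar> = \<bar>\<Sum>k=v..n. b k - b (Suc k)\<bar>"
    using sum_Suc_diff[of v n "\<lambda>k. - b k"] \<open>v \<le> n\<close> by simp
  also have "(real v + 1) powr \<beta> * \<bar>\<Sum>k=v..n. b k - b (Suc k)\<bar>
      \<le> (\<Sum>k=v..n. (real v + 1) powr \<beta> * \<bar>b k - b (Suc k)\<bar>)"
    by (simp add: sum_distrib_left[symmetric] sum_abs mult_left_mono)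
  also have "\<dots> \<le> (\<Sum>k=v..n. weighted_variation \<beta> r k)"
    unfolding weighted_variation_Suc b_def[symmetric]
    using \<open>0 \<le> \<beta>\<close> by (intro sum_mono mult_right_mono powr_mono2) auto
  finally show ?thesis .
qed

lemma mult_le_partial_sum_if_weighted_variation_bounded:
  assumes "0 \<le> \<beta>" "v \<le> n" "r (Suc n) = 0" "\<And>k. 0 \<le> r k"
    and variation: "\<And>m. m \<le> n \<Longrightarrow> (\<Sum>k=m..n. weighted_variation \<beta> r k) \<le> C * r m"
  shows "(real v + 1) * r v \<le> C * (\<Sum>j=0..v. r j)"
proof -
  have quasi_monotone: "r v \<le> C * r j" if "j \<le> v" for j
  proof -
    have "r v \<le> (\<Sum>k=v..n. weighted_variation \<beta> r k)"
      using assms by (intro le_sum_weighted_variation) auto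
    also have "\<dots> \<le> (\<Sum>k=j..n. weighted_variation \<beta> r k)"
      using that by (intro sum_mono2) (auto simp: weighted_variation_nonneg)
    also have "\<dots> \<le> C * r j"
      using that \<open>v \<le> n\<close> by (intro variation) simp
    finally show ?thesis .
  qed
  have "(real v + 1) * r v = (\<Sum>j=0..v. r v)"
    by simp
  also have "\<dots> \<le> (\<Sum>j=0..v. C * r j)"
    using quasi_monotone by (intro sum_mono) simp
  also have "\<dots> = C * (\<Sum>j=0..v. r j)"
    by (simp add: sum_distrib_left)
  finally show ?thesis .
qed

section \<open>The Dirichlet kernel and the kernel of the means\<close>

lemma sin_ge_quarter:
  fixes y :: real
  assumes "0 \<le> y" "y \<le> pi / 2"
  shows "y / 4 \<le> sin y"
proof (cases "y \<le> pi / 3")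
  case True
  have "sin 0 - 0 * cos 0 \<le> sin y - y * cos y"
  proof (rule DERIV_nonneg_imp_nondecreasing[where f = "\<lambda>t. sin t - t * cos t", OF \<open>0 \<le> y\<close>])
    fix t assume "0 \<le> t" "t \<le> y"
    then have "0 \<le> t * sin t"
      using assms by (intro mult_nonneg_nonneg sin_ge_zero) auto
    moreover have "((\<lambda>t. sin t - t * cos t) has_real_derivative t * sin t) (at t)"
      by (auto intro!: derivative_eq_intros)
    ultimately show "\<exists>d. ((\<lambda>t. sin t - t * cos t) has_real_derivative d) (at t) \<and> 0 \<le> d"
      by blast
  qed
  moreover have "1 / 2 \<le> cos y"
    using cos_monotone_0_pi_le[of y "pi / 3"] True \<open>0 \<le> y\<close> by (simp add: cos_60)
  ultimately show ?thesis
    using \<open>0 \<le> y\<close> mult_left_mono[OF \<open>1 / 2 \<le> cos y\<close> \<open>0 \<le> y\<close>] by simp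
next
  case False
  have "sin (pi / 3) \<le> sin y"
    using False assms by (subst sin_mono_le_eq) auto
  moreover have "1 \<le> sqrt 3"
    by simp
  ultimately have "1 / 2 \<le> sin y"
    unfolding sin_60 by linarith
  moreover have "y / 4 \<le> 1 / 2"
    using assms pi_less_4 by simp
  ultimately show ?thesis
    by linarith
qed

lemma two_sin_half_mult_sin:
  "2 * sin (u / 2) * sin ((real i + 1/2) * u) = cos (real i * u) - cos ((real i + 1) * u)"
proof -
  have "2 * sin (u / 2) * sin ((real i + 1/2) * u)
      = cos (u / 2 - (real i + 1/2) * u) - cos (u / 2 + (real i + 1/2) * u)"
    using sin_times_sin[of "u / 2" "(real i + 1/2) * u"] by simp
  also have "u / 2 - (real i + 1/2) * u = - (real i * u)"
    by (simp add: algebra_simps)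
  also have "u / 2 + (real i + 1/2) * u = (real i + 1) * u"
    by (simp add: algebra_simps)
  finally show ?thesis
    by simp
qed

lemma two_sin_half_mult_sum_sin:
  assumes "m \<le> Suc n"
  shows "2 * sin (u / 2) * (\<Sum>i=m..n. sin ((real i + 1/2) * u))
    = cos (real m * u) - cos ((real n + 1) * u)"
  unfolding sum_distrib_left two_sin_half_mult_sin
  using sum_Suc_diff[OF assms, of "\<lambda>i. - cos (real i * u)"] by (simp add: add.commute)

lemma abs_sum_sin_le:
  assumes "0 < sin (u / 2)" "m \<le> Suc n"
  shows "\<bar>\<Sum>i=m..n. sin ((real i + 1/2) * u)\<bar> \<le> 1 / sin (u / 2)"
proof -
  have "2 * (sin (u / 2) * \<bar>\<Sum>i=m..n. sin ((real i + 1/2) * u)\<bar>)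
      = \<bar>cos (real m * u) - cos ((real n + 1) * u)\<bar>"
    using assms(1) by (simp flip: two_sin_half_mult_sum_sin[OF assms(2)] add: abs_mult)
  also have "\<dots> \<le> 2"
    using abs_cos_le_one[of "real m * u"] abs_cos_le_one[of "(real n + 1) * u"] by linarith
  finally show ?thesis
    using assms(1) by (simp add: pos_le_divide_eq mult.commute)
qed

definition dirichlet_kernel :: "nat \<Rightarrow> real \<Rightarrow> real" where
  "dirichlet_kernel k u = 1/2 + (\<Sum>j=1..k. cos (real j * u))"

definition mean_kernel :: "(nat \<Rightarrow> real) \<Rightarrow> nat \<Rightarrow> real \<Rightarrow> real" where
  "mean_kernel r n u = (\<Sum>k=0..n. r k * dirichlet_kernel k u)"

lemma dirichlet_kernel_Suc:
  "dirichlet_kernel (Suc k) u = dirichlet_kernel k u + cos (real (Suc k) * u)"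
  by (simp add: dirichlet_kernel_def)

lemma dirichlet_kernel_minus [simp]: "dirichlet_kernel k (- u) = dirichlet_kernel k u"
  by (simp add: dirichlet_kernel_def)

lemma mean_kernel_minus [simp]: "mean_kernel r n (- u) = mean_kernel r n u"
  by (simp add: mean_kernel_def)

lemma dirichlet_kernel_periodic [simp]: "dirichlet_kernel k (u + 2 * pi) = dirichlet_kernel k u"
proof -
  have "cos (real j * (u + 2 * pi)) = cos (real j * u)" for j
    using cos.plus_of_nat[of "real j * u" j] by (simp add: algebra_simps)
  then show ?thesis
    by (simp add: dirichlet_kernel_def)
qed

lemma mean_kernel_periodic [simp]: "mean_kernel r n (u + 2 * pi) = mean_kernel r n u"
  by (simp add: mean_kernel_def)

lemma continuous_on_dirichlet_kernel [continuous_intros]: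
  fixes g :: "'a::t2_space \<Rightarrow> real"
  assumes "continuous_on S g"
  shows "continuous_on S (\<lambda>x. dirichlet_kernel k (g x))"
  unfolding dirichlet_kernel_def by (intro continuous_intros assms)

lemma continuous_on_mean_kernel [continuous_intros]:
  fixes g :: "'a::t2_space \<Rightarrow> real"
  assumes "continuous_on S g"
  shows "continuous_on S (\<lambda>x. mean_kernel r n (g x))"
  unfolding mean_kernel_def by (intro continuous_intros assms)

lemma abs_dirichlet_kernel_le: "\<bar>dirichlet_kernel k u\<bar> \<le> real k + 1"
proof -
  have "\<bar>\<Sum>j=1..k. cos (real j * u)\<bar> \<le> (\<Sum>j=1..k. 1)"
    by (intro order.trans[OF sum_abs] sum_mono) simp
  then show ?thesis
    by (simp add: dirichlet_kernel_def abs_le_iff)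
qed

lemma abs_mean_kernel_le: "\<bar>mean_kernel r n u\<bar> \<le> (real n + 1) * (\<Sum>k=0..n. \<bar>r k\<bar>)"
proof -
  have "\<bar>mean_kernel r n u\<bar> \<le> (\<Sum>k=0..n. \<bar>r k\<bar> * (real n + 1))"
    unfolding mean_kernel_def
  proof (intro order.trans[OF sum_abs] sum_mono)
    fix k assume "k \<in> {0..n}"
    then have "\<bar>dirichlet_kernel k u\<bar> \<le> real n + 1"
      using abs_dirichlet_kernel_le[of k u] by simp
    then show "\<bar>r k * dirichlet_kernel k u\<bar> \<le> \<bar>r k\<bar> * (real n + 1)"
      by (simp add: abs_mult mult_left_mono)
  qed
  then show ?thesis
    by (simp add: sum_distrib_left mult.commute)
qed

lemma two_sin_half_mult_dirichlet_kernel: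
  "2 * sin (u / 2) * dirichlet_kernel k u = sin ((real k + 1/2) * u)"
proof (induction k)
  case 0
  then show ?case
    by (simp add: dirichlet_kernel_def)
next
  case (Suc k)
  define w where "w = real (Suc k) * u"
  have "2 * sin (u / 2) * dirichlet_kernel (Suc k) u = sin ((real k + 1/2) * u) + 2 * sin (u / 2) * cos w"
    unfolding dirichlet_kernel_Suc distrib_left Suc.IH w_def ..
  also have "(real k + 1/2) * u = w - u / 2"
    by (simp add: w_def algebra_simps)
  also have "2 * sin (u / 2) * cos w = sin (w + u / 2) - sin (w - u / 2)"
    using cos_times_sin[of w "u / 2"] by (simp add: mult_ac)
  also have "w + u / 2 = (real (Suc k) + 1/2) * u"
    by (simp add: w_def algebra_simps)
  finally show ?case
    by simp
qed

lemma two_sin_half_mult_mean_kernel: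
  "2 * sin (u / 2) * mean_kernel r n u = (\<Sum>k=0..n. r k * sin ((real k + 1/2) * u))"
  unfolding mean_kernel_def sum_distrib_left
  by (simp add: two_sin_half_mult_dirichlet_kernel[symmetric] mult.left_commute)

section \<open>Estimates of the kernel\<close>

lemma abs_sum_sin_tail_le:
  assumes "0 \<le> \<beta>" "v \<le> n" "r (Suc n) = 0" "0 < sin (u / 2)"
  shows "\<bar>\<Sum>k=v..n. r k * sin ((real k + 1/2) * u)\<bar>
    \<le> 2 / sin (u / 2) * (\<Sum>k=v..n. weighted_variation \<beta> r k)"
proof -
  define c where "c k = (real k + 1) powr \<beta>" for k
  define b where "b k = r k / c k" for k
  define w where "w k = c k * sin ((real k + 1/2) * u)" for k
  have "c k > 0" for k
    by (simp add: c_def)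
  have "incseq c"
    unfolding c_def using \<open>0 \<le> \<beta>\<close> by (intro incseq_SucI powr_mono2) auto
  have variation: "weighted_variation \<beta> r k = c k * \<bar>b k - b (Suc k)\<bar>" for k
    by (simp add: weighted_variation_Suc b_def c_def)
  have partial_sums: "\<bar>\<Sum>j=v..k. w j\<bar> \<le> 2 / sin (u / 2) * c k" if "v \<le> k" for k
  proof -
    have "\<bar>\<Sum>j=v..k. c j * sin ((real j + 1/2) * u)\<bar> \<le> 2 * (1 / sin (u / 2)) * c k"
      using that \<open>incseq c\<close> \<open>c v > 0\<close> abs_sum_sin_le[OF assms(4)]
      by (intro Abel_inequality) auto
    then show ?thesis
      by (simp add: w_def)
  qed
  have "r k * sin ((real k + 1/2) * u) = b k * w k" for k
    using \<open>c k > 0\<close> by (simp add: b_def w_def)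
  then have "\<bar>\<Sum>k=v..n. r k * sin ((real k + 1/2) * u)\<bar> = \<bar>\<Sum>k=v..n. b k * w k\<bar>"
    by simp
  also have "\<dots> = \<bar>b n * (\<Sum>j=v..n. w j) + (\<Sum>k=v..<n. (b k - b (Suc k)) * (\<Sum>j=v..k. w j))\<bar>"
    by (simp only: sum_by_parts[OF \<open>v \<le> n\<close>])
  also have "\<dots> \<le> \<bar>b n\<bar> * \<bar>\<Sum>j=v..n. w j\<bar> + (\<Sum>k=v..<n. \<bar>b k - b (Suc k)\<bar> * \<bar>\<Sum>j=v..k. w j\<bar>)"
    unfolding abs_mult[symmetric] by (intro order.trans[OF abs_triangle_ineq] add_mono order_refl sum_abs)
  also have "\<dots> \<le> \<bar>b n\<bar> * (2 / sin (u / 2) * c n)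
      + (\<Sum>k=v..<n. \<bar>b k - b (Suc k)\<bar> * (2 / sin (u / 2) * c k))"
    using partial_sums \<open>v \<le> n\<close> by (intro add_mono sum_mono mult_left_mono) auto
  also have "\<dots> = 2 / sin (u / 2) * (\<Sum>k=v..n. weighted_variation \<beta> r k)"
    using \<open>v \<le> n\<close> \<open>r (Suc n) = 0\<close>
    by (simp add: variation sum.last_plus sum_distrib_left b_def algebra_simps)
  finally show ?thesis .
qed

lemma abs_two_sin_half_mult_mean_kernel_le:
  assumes "0 \<le> \<beta>" "v \<le> n" "r (Suc n) = 0" "\<And>k. 0 \<le> r k" "0 < sin (u / 2)"
  shows "\<bar>2 * sin (u / 2) * mean_kernel r n u\<bar>
    \<le> (\<Sum>k=0..<v. r k) + 2 / sin (u / 2) * (\<Sum>k=v..n. weighted_variation \<beta> r k)"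
proof -
  have split: "{0..n} = {0..<v} \<union> {v..n}"
    using \<open>v \<le> n\<close> by auto
  have "\<bar>\<Sum>k=0..<v. r k * sin ((real k + 1/2) * u)\<bar> \<le> (\<Sum>k=0..<v. r k)"
    using \<open>\<And>k. 0 \<le> r k\<close>
    by (intro order.trans[OF sum_abs] sum_mono) (simp add: abs_mult mult_left_le)
  moreover have "\<bar>\<Sum>k=v..n. r k * sin ((real k + 1/2) * u)\<bar>
      \<le> 2 / sin (u / 2) * (\<Sum>k=v..n. weighted_variation \<beta> r k)"
    using assms by (intro abs_sum_sin_tail_le) auto
  moreover have "(\<Sum>k=0..n. r k * sin ((real k + 1/2) * u))
      = (\<Sum>k=0..<v. r k * sin ((real k + 1/2) * u)) + (\<Sum>k=v..n. r k * sin ((real k + 1/2) * u))"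
    unfolding split by (rule sum.union_disjoint) auto
  ultimately show ?thesis
    unfolding two_sin_half_mult_mean_kernel by linarith
qed

lemma sin_half_bounds_on_block:
  assumes "1 \<le> v" and "pi / (real v + 1) \<le> u" and "u \<le> pi / real v"
  shows "0 < sin (u / 2)" and "1 / sin (u / 2) \<le> 8 * (real v + 1) / pi"
proof -
  have "0 < pi / (real v + 1)"
    by simp
  then have "0 < u"
    using assms(2) by linarith
  have "pi / real v \<le> pi / 1"
    using assms(1) by (intro divide_left_mono) auto
  then have "u \<le> pi"
    using assms(3) by simp
  have "pi / (8 * (real v + 1)) = pi / (real v + 1) / 8"
    by simp
  also have "\<dots> \<le> u / 8"
    using assms(2) by (rule divide_right_mono) simp
  also have "u / 8 \<le> sin (u / 2)"
    using sin_ge_quarter[of "u / 2"] \<open>0 < u\<close> \<open>u \<le> pi\<close> by simp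
  finally have lower: "pi / (8 * (real v + 1)) \<le> sin (u / 2)" .
  have "0 < pi / (8 * (real v + 1))"
    by simp
  then show positive: "0 < sin (u / 2)"
    using lower by (rule less_le_trans)
  have "1 / sin (u / 2) \<le> 1 / (pi / (8 * (real v + 1)))"
    using lower positive by (intro divide_left_mono mult_pos_pos) auto
  then show "1 / sin (u / 2) \<le> 8 * (real v + 1) / pi"
    by simp
qed

lemma abs_mean_kernel_le_on_block:
  assumes "0 \<le> \<beta>" "0 \<le> C" "\<And>k. 0 \<le> r k" "r (Suc n) = 0"
    and variation: "\<And>m. m \<le> n \<Longrightarrow> (\<Sum>k=m..n. weighted_variation \<beta> r k) \<le> C * r m"
    and "1 \<le> v" "v \<le> n" "pi / (real v + 1) \<le> u" "u \<le> pi / real v"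
  shows "\<bar>mean_kernel r n u\<bar> \<le> (4 / pi + 64 * C\<^sup>2 / pi\<^sup>2) * (real v + 1) * (\<Sum>j=0..v. r j)"
proof -
  define s where "s = sin (u / 2)"
  define A where "A = (\<Sum>j=0..v. r j)"
  define L where "L = 8 * (real v + 1) / pi"
  have "0 < s" and "1 / s \<le> L"
    using sin_half_bounds_on_block[OF assms(6,8,9)] by (simp_all add: s_def L_def)
  have "0 \<le> A"
    using assms by (simp add: A_def sum_nonneg)
  have head: "(\<Sum>k=0..<v. r k) \<le> A"
    unfolding A_def using assms by (intro sum_mono2) auto
  have tail: "(\<Sum>k=v..n. weighted_variation \<beta> r k) \<le> C * r v"
    using \<open>v \<le> n\<close> by (rule variation)
  have quasi_mono: "(real v + 1) * r v \<le> C * A"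
    unfolding A_def using assms by (intro mult_le_partial_sum_if_weighted_variation_bounded) auto
  have "\<bar>2 * s * mean_kernel r n u\<bar> \<le> A + 2 / s * (C * r v)"
    using abs_two_sin_half_mult_mean_kernel_le[of \<beta> v n r u] assms head tail \<open>0 < s\<close>
      mult_left_mono[OF tail, of "2 / s"] unfolding s_def by simp
  then have "2 * s * \<bar>mean_kernel r n u\<bar> \<le> A + 2 / s * (C * r v)"
    using \<open>0 < s\<close> by (simp add: abs_mult)
  then have "\<bar>mean_kernel r n u\<bar> \<le> (A + 2 / s * (C * r v)) / (2 * s)"
    using \<open>0 < s\<close> by (simp add: pos_le_divide_eq mult.commute)
  also have "\<dots> = 1 / s * A / 2 + (1 / s)\<^sup>2 * (C * r v)"
    using \<open>0 < s\<close> by (simp add: field_simps power2_eq_square)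
  also have "\<dots> \<le> L * A / 2 + L\<^sup>2 * (C * r v)"
    using \<open>1 / s \<le> L\<close> \<open>0 < s\<close> \<open>0 \<le> A\<close> \<open>0 \<le> C\<close> assms(3)
    by (intro add_mono divide_right_mono mult_right_mono power_mono) auto
  also have "\<dots> = L * A / 2 + 64 * (real v + 1) / pi\<^sup>2 * C * ((real v + 1) * r v)"
    by (simp add: L_def power2_eq_square field_simps)
  also have "\<dots> \<le> L * A / 2 + 64 * (real v + 1) / pi\<^sup>2 * C * (C * A)"
    using quasi_mono \<open>0 \<le> C\<close> by (intro add_left_mono mult_left_mono) auto
  also have "\<dots> = (4 / pi + 64 * C\<^sup>2 / pi\<^sup>2) * (real v + 1) * A"
    by (simp add: L_def power2_eq_square field_simps)
  finally show ?thesis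
    unfolding A_def .
qed

section \<open>Periodic functions and their integrals\<close>

lemma integrable_on_Icc_if_continuous:
  fixes g :: "real \<Rightarrow> real"
  shows "continuous_on UNIV g \<Longrightarrow> g integrable_on {a..b}"
  by (rule integrable_continuous_interval) (auto intro: continuous_on_subset)

lemma integral_periodic_window:
  fixes h :: "real \<Rightarrow> real"
  assumes "continuous_on UNIV h" and periodic: "\<And>x. h (x + p) = h x" and "0 < p"
  shows "integral {c..c + p} h = integral {0..p} h"
proof -
  interpret periodic_fun_simple h p
    by standard (rule periodic)
  define d where "d = of_int \<lceil>c / p\<rceil> * p"
  have "c / p \<le> of_int \<lceil>c / p\<rceil>"
    by (rule le_of_int_ceiling)
  then have "c \<le> d"
    unfolding d_def using \<open>0 < p\<close> by (metis pos_divide_le_eq)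
  have "of_int \<lceil>c / p\<rceil> < c / p + 1"
    using ceiling_correct[of "c / p"] by linarith
  then have "d < (c / p + 1) * p"
    unfolding d_def using \<open>0 < p\<close> by (rule mult_strict_right_mono)
  also have "(c / p + 1) * p = c + p"
    using \<open>0 < p\<close> by (simp add: field_simps)
  finally have "d \<le> c + p"
    by simp
  have integrable: "h integrable_on {a..b}" for a b
    using assms(1) by (rule integrable_on_Icc_if_continuous)
  have "integral {c..c + p} h = integral {c..d} h + integral {d..c + p} h"
    using Henstock_Kurzweil_Integration.integral_combine[OF \<open>c \<le> d\<close> \<open>d \<le> c + p\<close> integrable]
    by simp
  also have "integral {c..d} h = integral {c + p..d + p} h"
    using integral_shift_real_ivl[where f = h and a = "c + p" and b = "d + p" and c = p] by (simp add: periodic)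
  also have "integral {c + p..d + p} h + integral {d..c + p} h = integral {d..d + p} h"
    using Henstock_Kurzweil_Integration.integral_combine[OF \<open>d \<le> c + p\<close> _ integrable, of "d + p"]
      \<open>c \<le> d\<close> by (simp add: add.commute)
  also have "\<dots> = integral {0..p} (\<lambda>x. h (x + d))"
    using integral_shift_real_ivl[where f = h and a = d and b = "d + p" and c = d] by simp
  also have "(\<lambda>x. h (x + d)) = h"
    using plus_of_int by (simp add: d_def)
  finally show ?thesis .
qed

lemma integral_periodic_translate:
  fixes h :: "real \<Rightarrow> real"
  assumes "continuous_on UNIV h" and "\<And>x. h (x + 2 * pi) = h x"
  shows "integral {-pi..pi} (\<lambda>t. h (t + y)) = integral {-pi..pi} h"
proof -
  have window: "integral {c..c + 2 * pi} h = integral {0..2 * pi} h" for c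
    using assms by (rule integral_periodic_window) simp
  have "integral {-pi..pi} (\<lambda>t. h (t + y)) = integral {-pi + y..-pi + y + 2 * pi} h"
    using integral_shift_real_ivl[where f = h and a = "-pi + y" and b = "pi + y" and c = y]
    by (simp add: add_ac)
  also have "\<dots> = integral {-pi..-pi + 2 * pi} h"
    by (simp only: window)
  finally show ?thesis
    by simp
qed

lemma bounded_range_if_periodic:
  fixes h :: "real \<Rightarrow> real"
  assumes "continuous_on UNIV h" and periodic: "\<And>x. h (x + p) = h x" and "0 < p"
  shows "bounded (range h)"
proof -
  interpret periodic_fun_simple h p
    by standard (rule periodic)
  have "range h \<subseteq> h ` {0..p}"
  proof
    fix y assume "y \<in> range h"
    then obtain x where "y = h x"
      by blast
    define k where "k = \<lfloor>x / p\<rfloor>"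
    have "of_int k \<le> x / p" "x / p < of_int k + 1"
      unfolding k_def by linarith+
    then have "of_int k * p \<le> x" "x < (of_int k + 1) * p"
      using \<open>0 < p\<close> by (simp_all add: pos_le_divide_eq pos_divide_less_eq)
    then have "x - of_int k * p \<in> {0..p}"
      by (simp add: algebra_simps)
    moreover have "h (x - of_int k * p) = h x"
      by (rule minus_of_int)
    ultimately show "y \<in> h ` {0..p}"
      using \<open>y = h x\<close> by (metis image_eqI)
  qed
  moreover have "compact (h ` {0..p})"
    by (intro compact_continuous_image continuous_on_subset[OF assms(1)]) auto
  ultimately show ?thesis
    by (meson bounded_subset compact_imp_bounded)
qed

lemma abs_diff_le_modulus_cont:
  assumes "bounded (range f)" and "\<bar>h\<bar> \<le> \<delta>"
  shows "\<bar>f (y + h) - f y\<bar> \<le> modulus_cont f \<delta>"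
proof -
  obtain B where B: "\<And>x. \<bar>f x\<bar> \<le> B"
    using assms(1) by (auto simp: bounded_iff)
  show ?thesis
    unfolding modulus_cont_def
  proof (rule cSUP_upper2[where x = "(h, y)"])
    show "bdd_above ((\<lambda>q. \<bar>f (snd q + fst q) - f (snd q)\<bar>) ` {(h, x). \<bar>h\<bar> \<le> \<delta>})"
    proof (rule bdd_aboveI2)
      fix q
      show "\<bar>f (snd q + fst q) - f (snd q)\<bar> \<le> 2 * B"
        using B[of "snd q + fst q"] B[of "snd q"] by linarith
    qed
  qed (use assms(2) in auto)
qed

lemma modulus_cont_nonneg: "bounded (range f) \<Longrightarrow> 0 \<le> \<delta> \<Longrightarrow> 0 \<le> modulus_cont f \<delta>"
  using abs_diff_le_modulus_cont[of f 0 \<delta> 0] by simp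

lemma integral_symmetric_Icc:
  fixes g :: "real \<Rightarrow> real"
  assumes "continuous_on UNIV g" and "0 \<le> a"
  shows "integral {-a..a} g = integral {0..a} (\<lambda>u. g u + g (- u))"
proof -
  have "continuous_on UNIV (\<lambda>u. g (- u))"
    by (intro continuous_on_compose2[OF assms(1)] continuous_intros) auto
  then have integrable: "g integrable_on {b..c}" "(\<lambda>u. g (- u)) integrable_on {b..c}" for b c
    using assms(1) by (simp_all add: integrable_on_Icc_if_continuous)
  have "integral {-a..a} g = integral {-a..0} g + integral {0..a} g"
    using Henstock_Kurzweil_Integration.integral_combine[of "-a" 0 a g] \<open>0 \<le> a\<close> integrable by simp
  also have "integral {-a..0} g = integral {0..a} (\<lambda>u. g (- u))"
    using Henstock_Kurzweil_Integration.integral_reflect_real[of a 0 "\<lambda>u. g (- u)"] by simp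
  also have "integral {0..a} (\<lambda>u. g (- u)) + integral {0..a} g = integral {0..a} (\<lambda>u. g u + g (- u))"
    using integrable by (simp add: integral_add add.commute)
  finally show ?thesis .
qed

lemma integral_Icc_eq_blocks:
  fixes G :: "real \<Rightarrow> real"
  assumes "G integrable_on {0..c}" and "0 \<le> c"
  shows "integral {0..c} G
    = integral {0..c / (real n + 1)} G + (\<Sum>v=1..n. integral {c / (real v + 1)..c / real v} G)"
proof (induction n)
  case (Suc n)
  have "0 \<le> c / (real n + 2)" "c / (real n + 2) \<le> c / (real n + 1)"
    using \<open>0 \<le> c\<close> by (auto intro!: divide_left_mono)
  moreover have "c / (real n + 1) \<le> c / 1"
    by (rule divide_left_mono) (use \<open>0 \<le> c\<close> in auto)
  ultimately have "integral {0..c / (real n + 1)} G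
      = integral {0..c / (real n + 2)} G + integral {c / (real n + 2)..c / (real n + 1)} G"
    using assms(1)
    by (intro Henstock_Kurzweil_Integration.integral_combine[symmetric] integrable_on_subinterval) auto
  with Suc.IH show ?case
    by (simp add: add_ac)
qed simp

lemma integral_le_const_Icc:
  fixes G :: "real \<Rightarrow> real"
  assumes "G integrable_on {a..b}" and "a \<le> b" and "\<And>u. a \<le> u \<Longrightarrow> u \<le> b \<Longrightarrow> G u \<le> M"
  shows "integral {a..b} G \<le> M * (b - a)"
  using integral_le[OF assms(1) integrable_const_ivl[of M a b]] assms(2,3) by (simp add: mult.commute)

lemma block_length_mult:
  assumes "1 \<le> v"
  shows "(real v + 1) * (c / real v - c / (real v + 1)) = c / real v"
proof -
  have "0 < real v"
    using assms by simp
  have "(real v + 1) * (c / real v - c / (real v + 1)) = (real v + 1) * c / real v - (real v + 1) * c / (real v + 1)"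
    by (simp add: right_diff_distrib)
  also have "(real v + 1) * c / (real v + 1) = c"
    using \<open>0 < real v\<close> by simp
  also have "(real v + 1) * c / real v - c = c / real v"
    using \<open>0 < real v\<close> by (simp add: field_simps)
  finally show ?thesis .
qed

lemma integral_le_by_blocks:
  fixes G :: "real \<Rightarrow> real"
  assumes "G integrable_on {0..c}" and "0 \<le> c"
    and initial: "\<And>u. 0 \<le> u \<Longrightarrow> u \<le> c / (real n + 1) \<Longrightarrow> G u \<le> (real n + 1) * M0"
    and block: "\<And>v u. 1 \<le> v \<Longrightarrow> v \<le> n \<Longrightarrow> c / (real v + 1) \<le> u \<Longrightarrow> u \<le> c / real v
      \<Longrightarrow> G u \<le> (real v + 1) * M v"
  shows "integral {0..c} G \<le> c * (M0 + (\<Sum>v=1..n. M v / real v))"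
proof -
  have "c / (real v + 1) \<le> c / real v" if "1 \<le> v" for v
    using \<open>0 \<le> c\<close> that by (auto intro!: divide_left_mono)
  moreover have "c / real v \<le> c / 1" if "1 \<le> v" for v
    by (rule divide_left_mono) (use \<open>0 \<le> c\<close> that in auto)
  ultimately have "(\<Sum>v=1..n. integral {c / (real v + 1)..c / real v} G)
      \<le> (\<Sum>v=1..n. (real v + 1) * M v * (c / real v - c / (real v + 1)))"
    using \<open>0 \<le> c\<close>
    by (intro sum_mono integral_le_const_Icc block integrable_on_subinterval[OF assms(1)]) auto
  also have "\<dots> = (\<Sum>v=1..n. c * (M v / real v))"
  proof (rule sum.cong[OF refl])
    fix v assume "v \<in> {1..n}"
    then have "1 \<le> v"
      by simp
    have "(real v + 1) * M v * (c / real v - c / (real v + 1))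
        = M v * ((real v + 1) * (c / real v - c / (real v + 1)))"
      by (simp only: mult_ac)
    also have "\<dots> = M v * (c / real v)"
      unfolding block_length_mult[OF \<open>1 \<le> v\<close>] ..
    finally show "(real v + 1) * M v * (c / real v - c / (real v + 1)) = c * (M v / real v)"
      by simp
  qed
  finally have blocks: "(\<Sum>v=1..n. integral {c / (real v + 1)..c / real v} G) \<le> c * (\<Sum>v=1..n. M v / real v)"
    by (simp add: sum_distrib_left)
  have "c / (real n + 1) \<le> c / 1"
    by (rule divide_left_mono) (use \<open>0 \<le> c\<close> in auto)
  then have "integral {0..c / (real n + 1)} G \<le> (real n + 1) * M0 * (c / (real n + 1) - 0)"
    using \<open>0 \<le> c\<close>
    by (intro integral_le_const_Icc initial integrable_on_subinterval[OF assms(1)]) auto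
  also have "\<dots> = c * M0"
    by (simp add: field_simps add_pos_nonneg)
  finally show ?thesis
    unfolding integral_Icc_eq_blocks[OF assms(1,2), of n] using blocks by (simp add: distrib_left)
qed

section \<open>Integral representation of the means\<close>

lemma has_integral_dirichlet_kernel: "(dirichlet_kernel k has_integral pi) {-pi..pi}"
proof -
  have "((\<lambda>t. 1/2) has_integral pi) {-pi..pi}"
    using has_integral_const_real[of "1/2 :: real" "-pi" pi] by simp
  moreover have "((\<lambda>t. cos (real j * t)) has_integral 0) {-pi..pi}" if "j \<in> {1..k}" for j
    using has_integral_cos_nx[of "int j"] that by simp
  then have "((\<lambda>t. \<Sum>j=1..k. cos (real j * t)) has_integral 0) {-pi..pi}"
    using has_integral_sum[of "{1..k}" "\<lambda>j t. cos (real j * t)" "\<lambda>_. 0"] by simp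
  ultimately have "((\<lambda>t. 1/2 + (\<Sum>j=1..k. cos (real j * t))) has_integral pi + 0) {-pi..pi}"
    by (rule has_integral_add)
  then show ?thesis
    by (simp add: dirichlet_kernel_def[abs_def])
qed

lemma integral_mean_kernel: "integral {-pi..pi} (mean_kernel r n) = pi * (\<Sum>k=0..n. r k)"
proof -
  have "(mean_kernel r n has_integral (\<Sum>k=0..n. r k * pi)) {-pi..pi}"
    unfolding mean_kernel_def
    by (intro has_integral_sum has_integral_mult_right has_integral_dirichlet_kernel) simp
  then show ?thesis
    by (simp add: integral_unique sum_distrib_left mult.commute)
qed

lemma fourier_partial_sum_Suc:
  "fourier_partial_sum f (Suc k) x = fourier_partial_sum f k x
     + (fourier_a f (Suc k) * cos (real (Suc k) * x) + fourier_b f (Suc k) * sin (real (Suc k) * x))"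
  by (simp add: fourier_partial_sum_def)

lemma integral_mult_dirichlet_kernel:
  assumes "continuous_on UNIV f"
  shows "integral {-pi..pi} (\<lambda>t. f t * dirichlet_kernel k (t - x)) = pi * fourier_partial_sum f k x"
proof (induction k)
  case 0
  have "integral {-pi..pi} (\<lambda>t. f t * dirichlet_kernel 0 (t - x)) = integral {-pi..pi} f / 2"
    by (simp add: dirichlet_kernel_def)
  then show ?case
    by (simp add: fourier_partial_sum_def fourier_a_def)
next
  case (Suc k)
  define j where "j = real (Suc k)"
  have has_integral: "(g has_integral integral {-pi..pi} g) {-pi..pi}"
    if "continuous_on UNIV g" for g :: "real \<Rightarrow> real"
    using that by (intro integrable_integral integrable_on_Icc_if_continuous)
  have "cos (j * (t - x)) = cos (j * x) * cos (j * t) + sin (j * x) * sin (j * t)" for t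
    by (simp add: right_diff_distrib cos_diff mult.commute)
  then have "(\<lambda>t. f t * dirichlet_kernel (Suc k) (t - x)) = (\<lambda>t. f t * dirichlet_kernel k (t - x)
      + (cos (j * x) * (f t * cos (j * t)) + sin (j * x) * (f t * sin (j * t))))"
    unfolding dirichlet_kernel_Suc j_def[symmetric] by (simp add: algebra_simps)
  moreover have "((\<lambda>t. f t * dirichlet_kernel k (t - x)
      + (cos (j * x) * (f t * cos (j * t)) + sin (j * x) * (f t * sin (j * t)))) has_integral
      integral {-pi..pi} (\<lambda>t. f t * dirichlet_kernel k (t - x))
        + (cos (j * x) * integral {-pi..pi} (\<lambda>t. f t * cos (j * t))
          + sin (j * x) * integral {-pi..pi} (\<lambda>t. f t * sin (j * t)))) {-pi..pi}"
    by (intro has_integral_add has_integral_mult_right has_integral continuous_intros assms)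
  ultimately have "integral {-pi..pi} (\<lambda>t. f t * dirichlet_kernel (Suc k) (t - x))
      = pi * fourier_partial_sum f k x
        + (cos (j * x) * integral {-pi..pi} (\<lambda>t. f t * cos (j * t))
          + sin (j * x) * integral {-pi..pi} (\<lambda>t. f t * sin (j * t)))"
    using Suc.IH by (simp add: integral_unique)
  also have "\<dots> = pi * fourier_partial_sum f (Suc k) x"
    unfolding fourier_partial_sum_Suc fourier_a_def fourier_b_def j_def[symmetric]
    by (simp add: field_simps)
  finally show ?case .
qed

lemma integral_mult_mean_kernel:
  assumes "continuous_on UNIV f"
  shows "integral {-pi..pi} (\<lambda>t. f t * mean_kernel (a n) n (t - x)) = pi * T_mean a f n x"
proof -
  have "((\<lambda>t. f t * dirichlet_kernel k (t - x)) has_integral pi * fourier_partial_sum f k x) {-pi..pi}" for k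
    using integrable_integral[of "\<lambda>t. f t * dirichlet_kernel k (t - x)" "{-pi..pi}"] assms
    by (simp add: integral_mult_dirichlet_kernel integrable_on_Icc_if_continuous continuous_intros)
  then have "((\<lambda>t. f t * mean_kernel (a n) n (t - x)) has_integral
      (\<Sum>k=0..n. a n k * (pi * fourier_partial_sum f k x))) {-pi..pi}"
    unfolding mean_kernel_def sum_distrib_left mult.left_commute[of "f _"]
    by (intro has_integral_sum has_integral_mult_right) auto
  then show ?thesis
    by (simp add: integral_unique T_mean_def sum_distrib_left mult.left_commute)
qed

lemma T_mean_minus_eq_integral:
  assumes "continuous_on UNIV f" and periodic: "\<And>x. f (x + 2 * pi) = f x"
    and "(\<Sum>k=0..n. a n k) = 1"
  shows "T_mean a f n x - f x = integral {-pi..pi} (\<lambda>u. (f (x + u) - f x) * mean_kernel (a n) n u) / pi"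
proof -
  let ?K = "mean_kernel (a n) n"
  have continuous: "continuous_on UNIV (\<lambda>u. (f (x + u) - f x) * ?K u)"
    by (intro continuous_intros continuous_on_compose2[OF assms(1)]) auto
  have "(f (x + (u + 2 * pi)) - f x) * ?K (u + 2 * pi) = (f (x + u) - f x) * ?K u" for u
    using periodic[of "x + u"] by (simp add: add.assoc)
  from integral_periodic_translate[OF continuous this, of "- x"]
  have "integral {-pi..pi} (\<lambda>u. (f (x + u) - f x) * ?K u)
      = integral {-pi..pi} (\<lambda>t. (f t - f x) * ?K (t - x))"
    by simp
  also have "\<dots> = integral {-pi..pi} (\<lambda>t. f t * ?K (t - x)) - f x * integral {-pi..pi} (\<lambda>t. ?K (t - x))"
    using assms(1)
    by (simp add: left_diff_distrib integral_diff integral_mult_right integrable_on_Icc_if_continuous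
        continuous_intros)
  also have "integral {-pi..pi} (\<lambda>t. ?K (t - x)) = pi"
    using integral_periodic_translate[of ?K "- x"] integral_mean_kernel[of "a n" n] assms(3)
    by (simp add: continuous_intros)
  also have "integral {-pi..pi} (\<lambda>t. f t * ?K (t - x)) = pi * T_mean a f n x"
    using assms(1) by (rule integral_mult_mean_kernel)
  finally show ?thesis
    by (simp add: field_simps)
qed

section \<open>The approximation estimate\<close>

lemma abs_T_mean_minus_le_integral:
  assumes "continuous_on UNIV f" and "\<And>x. f (x + 2 * pi) = f x" and "(\<Sum>k=0..n. a n k) = 1"
  shows "\<bar>T_mean a f n x - f x\<bar>
    \<le> integral {0..pi} (\<lambda>u. (\<bar>f (x + u) - f x\<bar> + \<bar>f (x - u) - f x\<bar>) * \<bar>mean_kernel (a n) n u\<bar>) / pi"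
proof -
  let ?K = "mean_kernel (a n) n"
  define F where "F u = \<bar>f (x + u) - f x\<bar> * \<bar>?K u\<bar>" for u
  have "continuous_on UNIV (\<lambda>u. f (x + u))"
    by (intro continuous_on_compose2[OF assms(1)] continuous_intros) auto
  then have "continuous_on UNIV (\<lambda>u. (f (x + u) - f x) * ?K u)" and "continuous_on UNIV F"
    unfolding F_def by (intro continuous_intros; assumption)+
  then have "norm (integral {-pi..pi} (\<lambda>u. (f (x + u) - f x) * ?K u)) \<le> integral {-pi..pi} F"
    by (rule integral_norm_bound_integral[OF integrable_on_Icc_if_continuous integrable_on_Icc_if_continuous])
      (simp add: F_def abs_mult)
  then have "\<bar>integral {-pi..pi} (\<lambda>u. (f (x + u) - f x) * ?K u)\<bar> \<le> integral {-pi..pi} F"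
    by simp
  also have "\<dots> = integral {0..pi} (\<lambda>u. F u + F (- u))"
    using \<open>continuous_on UNIV F\<close> by (rule integral_symmetric_Icc) simp
  also have "(\<lambda>u. F u + F (- u))
      = (\<lambda>u. (\<bar>f (x + u) - f x\<bar> + \<bar>f (x - u) - f x\<bar>) * \<bar>?K u\<bar>)"
    by (simp add: F_def algebra_simps)
  finally show ?thesis
    unfolding T_mean_minus_eq_integral[where a = a and n = n, OF assms] by (simp add: divide_right_mono)
qed

lemma deviation_le_modulus_cont:
  assumes "bounded (range f)" and "0 \<le> u" and "u \<le> \<delta>"
  shows "\<bar>f (x + u) - f x\<bar> + \<bar>f (x - u) - f x\<bar> \<le> 2 * modulus_cont f \<delta>"
  using abs_diff_le_modulus_cont[OF assms(1), of u \<delta> x]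
    abs_diff_le_modulus_cont[OF assms(1), of "- u" \<delta> x] assms(2,3)
  by (simp add: add.commute)

lemma abs_T_mean_minus_le:
  assumes "continuous_on UNIV f" and "\<And>x. f (x + 2 * pi) = f x"
    and "\<And>k. n < k \<Longrightarrow> a n k = 0" and "\<And>k. 0 \<le> a n k" and "(\<Sum>k=0..n. a n k) = 1"
    and "0 \<le> \<beta>" and "0 \<le> C"
    and variation: "\<And>m. m \<le> n \<Longrightarrow> (\<Sum>k=m..n. weighted_variation \<beta> (a n) k) \<le> C * a n m"
  shows "\<bar>T_mean a f n x - f x\<bar> \<le> 2 * modulus_cont f (pi / (real n + 1))
    + 2 * (4 / pi + 64 * C\<^sup>2 / pi\<^sup>2)
      * (\<Sum>v=1..n. 1 / real v * modulus_cont f (pi / real v) * (\<Sum>j=0..v. a n j))"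
proof -
  define D where "D = 4 / pi + 64 * C\<^sup>2 / pi\<^sup>2"
  define \<omega> where "\<omega> = modulus_cont f"
  define A where "A v = (\<Sum>j=0..v. a n j)" for v
  define G where "G = (\<lambda>u. (\<bar>f (x + u) - f x\<bar> + \<bar>f (x - u) - f x\<bar>) * \<bar>mean_kernel (a n) n u\<bar>)"
  have "bounded (range f)"
    using assms(1,2) by (rule bounded_range_if_periodic) simp
  have G_le: "G u \<le> M * (2 * \<omega> \<delta>)" if "0 \<le> u" "u \<le> \<delta>" "\<bar>mean_kernel (a n) n u\<bar> \<le> M" for u \<delta> M
    unfolding G_def \<omega>_def using that deviation_le_modulus_cont[OF \<open>bounded (range f)\<close> that(1,2)]
    by (subst mult.commute, intro mult_mono) (auto intro: modulus_cont_nonneg[OF \<open>bounded (range f)\<close>])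
  have "continuous_on UNIV (\<lambda>u. f (x + u))" "continuous_on UNIV (\<lambda>u. f (x - u))"
    by (intro continuous_on_compose2[OF assms(1)] continuous_intros; simp)+
  then have "G integrable_on {0..pi}"
    unfolding G_def by (intro integrable_on_Icc_if_continuous continuous_intros)
  then have "integral {0..pi} G
      \<le> pi * (2 * \<omega> (pi / (real n + 1)) + (\<Sum>v=1..n. 2 * \<omega> (pi / real v) * (D * A v) / real v))"
  proof (rule integral_le_by_blocks)
    fix u assume "0 \<le> u" "u \<le> pi / (real n + 1)"
    moreover have "\<bar>mean_kernel (a n) n u\<bar> \<le> real n + 1"
      using abs_mean_kernel_le[of "a n" n u] assms(4,5) by simp
    ultimately show "G u \<le> (real n + 1) * (2 * \<omega> (pi / (real n + 1)))"
      by (rule G_le)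
  next
    fix v u assume v: "1 \<le> v" "v \<le> n" and u: "pi / (real v + 1) \<le> u" "u \<le> pi / real v"
    have "0 < pi / (real v + 1)"
      by simp
    then have "0 \<le> u"
      using u(1) by linarith
    moreover note \<open>u \<le> pi / real v\<close>
    moreover have "\<bar>mean_kernel (a n) n u\<bar> \<le> D * (real v + 1) * A v"
      unfolding D_def A_def using assms v u by (intro abs_mean_kernel_le_on_block) auto
    ultimately have "G u \<le> D * (real v + 1) * A v * (2 * \<omega> (pi / real v))"
      by (rule G_le)
    then show "G u \<le> (real v + 1) * (2 * \<omega> (pi / real v) * (D * A v))"
      by (simp add: mult_ac)
  qed simp
  then have "integral {0..pi} G / pi
      \<le> 2 * \<omega> (pi / (real n + 1)) + 2 * D * (\<Sum>v=1..n. 1 / real v * \<omega> (pi / real v) * A v)"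
    by (simp add: pos_divide_le_eq sum_distrib_left mult_ac)
  moreover have "\<bar>T_mean a f n x - f x\<bar> \<le> integral {0..pi} G / pi"
    unfolding G_def by (rule abs_T_mean_minus_le_integral[where a = a and n = n, OF assms(1,2,5)])
  ultimately show ?thesis
    unfolding \<omega>_def A_def D_def by linarith
qed

theorem theorem3p3:
  fixes f :: "real \<Rightarrow> real" and a :: "nat \<Rightarrow> nat \<Rightarrow> real" and \<beta> :: real
  assumes cont: "continuous_on UNIV f"
    and periodic: "\<And>x. f (x + 2 * pi) = f x"
    and lower: "\<And>n k. k > n \<Longrightarrow> a n k = 0"
    and nonneg: "\<And>n k. a n k \<ge> 0"
    and rowsum: "\<And>n. (\<Sum>k\<in>{0..n}. a n k) = 1"
    and beta: "\<beta> \<ge> 0"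
    and cond: "\<exists>C>0. \<forall>n m. m \<le> n \<longrightarrow>
        (\<Sum>k. if k \<ge> m then (real k + 1) powr \<beta> *
              \<bar>a n k / (real k + 1) powr \<beta> - a n (k + 1) / (real k + 2) powr \<beta>\<bar> else 0)
        \<le> C * a n m"
  shows "\<exists>C>0. \<forall>n.
      sup_norm (\<lambda>x. T_mean a f n x - f x)
      \<le> C * (modulus_cont f (pi / (real n + 1)) +
             (\<Sum>v\<in>{1..n}. (1 / real v) * modulus_cont f (pi / real v) * (\<Sum>j\<in>{0..v}. a n j)))"
proof -
  obtain C where "C > 0" and C: "\<And>n m. m \<le> n \<Longrightarrow>
      (\<Sum>k. if m \<le> k then weighted_variation \<beta> (a n) k else 0) \<le> C * a n m"
    using cond unfolding weighted_variation_def by auto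
  have variation: "(\<Sum>k=m..n. weighted_variation \<beta> (a n) k) \<le> C * a n m" if "m \<le> n" for n m
    using C[OF that] lower by (simp add: sum_weighted_variation_eq_suminf)
  have "bounded (range f)"
    using cont periodic by (rule bounded_range_if_periodic) simp
  define D where "D = 4 / pi + 64 * C\<^sup>2 / pi\<^sup>2"
  have "0 < D"
    by (simp add: D_def add_pos_nonneg)
  show ?thesis
  proof (intro exI[of _ "2 + 2 * D"] conjI allI)
    fix n
    define W where "W = modulus_cont f (pi / (real n + 1))"
    define S where "S = (\<Sum>v=1..n. 1 / real v * modulus_cont f (pi / real v) * (\<Sum>j=0..v. a n j))"
    have "0 \<le> W" "0 \<le> S"
      unfolding W_def S_def using \<open>bounded (range f)\<close> nonneg
      by (intro modulus_cont_nonneg sum_nonneg mult_nonneg_nonneg; simp)+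
    have "sup_norm (\<lambda>x. T_mean a f n x - f x) \<le> 2 * W + 2 * D * S"
      unfolding sup_norm_def W_def S_def D_def
      using cont periodic lower nonneg rowsum beta \<open>C > 0\<close> variation
      by (intro cSUP_least abs_T_mean_minus_le) auto
    also have "\<dots> \<le> (2 + 2 * D) * (W + S)"
      using \<open>0 \<le> W\<close> \<open>0 \<le> S\<close> \<open>0 < D\<close> by (simp add: algebra_simps)
    finally show "sup_norm (\<lambda>x. T_mean a f n x - f x) \<le> (2 + 2 * D) * (W + S)" .
  qed (simp add: \<open>0 < D\<close> add_pos_pos)
qed

end
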